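(* Let $V:\mathbb{R}\to\mathbb{R}$ be $C^2$, $I_1>0$, $\delta\in\mathbb{R}$, and consider on $\mathbb{R}^3\times\mathbb{R}^3\ni(\bm{a},\bm{l})$ the vector field \[ \dot{\bm{a}}=-\bm{a}\times\nabla_{\bm{l}}H,\qquad \dot{\bm{l}}=-\bm{a}\times\nabla_{\bm{a}}H-\bm{l}\times\nabla_{\bm{l}}H,\qquad H=\frac{1}{2I_1}\big(|\bm{l}|^2+\delta(\bm{a}\cdot\bm{l})^2\big)+V(a_z). \] For $s\in\{+1,-1\}$ and $m\in\mathbb{R}$, the point $\bm{a}=s\bm{e}_z$, $\bm{l}=m\bm{e}_z$ is an equilibrium, and the characteristic polynomial of the linearisation there is $\lambda^2P_+(\lambda)$, where \[ P_+(\lambda)=\lambda^4+\lambda^2(\kappa^2-2f)+f^2,\qquad \kappa=\frac{m}{I_1},\quad f=\frac{sV'(s)}{I_1} \] (independent of $\delta$). Consequently all roots of $P_+$ lie on the imaginary axis if and only if $\kappa^2\ge 4f$; if $\kappa^2<4f$, $P_+$ has roots with nonzero real part.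
   Context: $\bm{e}_z=(0,0,1)^t$, $a_z$ is the third component of $\bm{a}$, and $\times$ is the cross product in $\mathbb{R}^3$. *)

theory Defs
  imports "HOL-Analysis.Analysis"
begin

definition ez :: "real^3" where
  "ez = vector [0, 0, 1]"

definition Ham :: "real \<Rightarrow> real \<Rightarrow> (real \<Rightarrow> real) \<Rightarrow> real^3 \<Rightarrow> real^3 \<Rightarrow> real" where
  "Ham I1 \<delta> V a l = (1 / (2 * I1)) * ((norm l)^2 + \<delta> * (a \<bullet> l)^2) + V (a $ 3)"

text \<open>Partial gradients of Ham (written out; V' is the derivative of V).\<close>
definition grad_l :: "real \<Rightarrow> real \<Rightarrow> real^3 \<Rightarrow> real^3 \<Rightarrow> real^3" where
  "grad_l I1 \<delta> a l = (1 / I1) *\<^sub>R (l + (\<delta> * (a \<bullet> l)) *\<^sub>R a)"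

definition grad_a :: "real \<Rightarrow> real \<Rightarrow> (real \<Rightarrow> real) \<Rightarrow> real^3 \<Rightarrow> real^3 \<Rightarrow> real^3" where
  "grad_a I1 \<delta> V' a l = (\<delta> * (a \<bullet> l) / I1) *\<^sub>R l + V' (a $ 3) *\<^sub>R ez"

text \<open>State space R^3 x R^3 identified with R^6: z = (a_1,a_2,a_3,l_1,l_2,l_3).\<close>
definition apart :: "real^6 \<Rightarrow> real^3" where
  "apart z = vector [z $ 1, z $ 2, z $ 3]"

definition lpart :: "real^6 \<Rightarrow> real^3" where
  "lpart z = vector [z $ 4, z $ 5, z $ 6]"

definition pack :: "real^3 \<Rightarrow> real^3 \<Rightarrow> real^6" where
  "pack a l = vector [a $ 1, a $ 2, a $ 3, l $ 1, l $ 2, l $ 3]"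

definition field :: "real \<Rightarrow> real \<Rightarrow> (real \<Rightarrow> real) \<Rightarrow> real^6 \<Rightarrow> real^6" where
  "field I1 \<delta> V' z =
     (let a = apart z; l = lpart z in
      pack (- cross3 a (grad_l I1 \<delta> a l))
           (- cross3 a (grad_a I1 \<delta> V' a l) - cross3 l (grad_l I1 \<delta> a l)))"

definition Pplus :: "real \<Rightarrow> real \<Rightarrow> complex \<Rightarrow> complex" where
  "Pplus \<kappa> f w = w^4 + w^2 * of_real (\<kappa>^2 - 2 * f) + of_real (f^2)"

end

theory Submission
  imports Defs
begin

text \<open>
  At \<open>a = s e_z\<close>, \<open>l = m e_z\<close> every cross product in the field vanishes. In the
  linearisation the \<open>\<delta>\<close>-terms cancel because \<open>s\<^sup>2 = 1\<close>, and the rows of \<open>a_z\<close> and \<open>l_z\<close>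
  are zero, which splits off the factor \<open>\<lambda>\<^sup>2\<close>; the remaining block on \<open>(a_1, a_2, l_1, l_2)\<close>
  has characteristic polynomial \<open>P_+\<close>. Finally
  \<open>P_+(\<lambda>) = (\<lambda>\<^sup>2 + i\<kappa>\<lambda> - f) (\<lambda>\<^sup>2 - i\<kappa>\<lambda> - f)\<close>, and the roots
  \<open>(\<plusminus>i\<kappa> \<plusminus> sqrt(4f - \<kappa>\<^sup>2)) / 2\<close> of the factors are purely imaginary exactly when \<open>\<kappa>\<^sup>2 \<ge> 4f\<close>.
\<close>

lemma exhaust_6:
  fixes x :: 6
  shows "x = 1 \<or> x = 2 \<or> x = 3 \<or> x = 4 \<or> x = 5 \<or> x = 6"
proof (induct x)
  case (of_int z)
  then have "z = 0 \<or> z = 1 \<or> z = 2 \<or> z = 3 \<or> z = 4 \<or> z = 5" by fastforce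
  then show ?case by auto
qed

lemma forall_6: "(\<forall>i::6. P i) \<longleftrightarrow> P 1 \<and> P 2 \<and> P 3 \<and> P 4 \<and> P 5 \<and> P 6"
  by (metis exhaust_6)

lemma sum_6: "(\<Sum>i::6\<in>UNIV. f i) = f 1 + f 2 + f 3 + f 4 + f 5 + f 6"
proof -
  have UNIV_6: "UNIV = {1, 2, 3, 4, 5, 6::6}"
    using exhaust_6 by auto
  show ?thesis
    unfolding UNIV_6 by (simp add: ac_simps)
qed

lemma vector_6 [simp]:
  "(vector [a, b, c, d, e, f] :: 'a::zero^6) $ 1 = a"
  "(vector [a, b, c, d, e, f] :: 'a::zero^6) $ 2 = b"
  "(vector [a, b, c, d, e, f] :: 'a::zero^6) $ 3 = c"
  "(vector [a, b, c, d, e, f] :: 'a::zero^6) $ 4 = d"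
  "(vector [a, b, c, d, e, f] :: 'a::zero^6) $ 5 = e"
  "(vector [a, b, c, d, e, f] :: 'a::zero^6) $ 6 = f"
  unfolding vector_def by simp_all

lemma has_derivative_vec_nth_iff:
  fixes f :: "'a::real_normed_vector \<Rightarrow> real^'n"
  shows "(f has_derivative f') (at a within S) \<longleftrightarrow>
    (\<forall>k. ((\<lambda>x. f x $ k) has_derivative (\<lambda>h. f' h $ k)) (at a within S))"
  by (auto simp: has_derivative_componentwise_within[of f] Basis_vec_def cart_eq_inner_axis)

lemma det_eq_prod_diagonal_times_det_block:
  fixes A :: "'a::comm_ring_1^'n^'n"
  assumes "\<And>i j. i \<notin> T \<Longrightarrow> j \<noteq> i \<Longrightarrow> A$i$j = 0"
  shows "det A = (\<Prod>i\<in>-T. A$i$i) *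
    (\<Sum>p\<in>{p. p permutes T}. of_int (sign p) * (\<Prod>i\<in>T. A$i$(p i)))"
proof -
  let ?term = "\<lambda>p. of_int (sign p) * (\<Prod>i\<in>UNIV. A$i$(p i))"
  have "?term p = 0" if p: "p permutes UNIV" "\<not> p permutes T" for p
  proof -
    obtain i where "i \<notin> T" "p i \<noteq> i"
      using p unfolding permutes_def by blast
    with assms have "A$i$(p i) = 0" by auto
    then show ?thesis by (metis UNIV_I finite prod_zero mult_zero_right)
  qed
  then have "det A = (\<Sum>p\<in>{p. p permutes T}. ?term p)"
    unfolding det_def
    by (intro sum.mono_neutral_right) (auto intro: permutes_subset simp: finite_permutations)
  also have "\<dots> = (\<Sum>p\<in>{p. p permutes T}. (\<Prod>i\<in>-T. A$i$i) *
      (of_int (sign p) * (\<Prod>i\<in>T. A$i$(p i))))"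
  proof (rule sum.cong[OF refl])
    fix p assume "p \<in> {p. p permutes T}"
    then have "p i = i" if "i \<in> -T" for i
      using that permutes_not_in by fastforce
    then have "(\<Prod>i\<in>UNIV. A$i$(p i)) = (\<Prod>i\<in>-T. A$i$i) * (\<Prod>i\<in>T. A$i$(p i))"
      by (simp add: prod.subset_diff[of T UNIV] Compl_eq_Diff_UNIV)
    then show "?term p = (\<Prod>i\<in>-T. A$i$i) * (of_int (sign p) * (\<Prod>i\<in>T. A$i$(p i)))"
      by (simp add: algebra_simps)
  qed
  finally show ?thesis by (simp add: sum_distrib_left)
qed

definition equilibrium_jacobian :: "real \<Rightarrow> real \<Rightarrow> real \<Rightarrow> real^6^6" where
  "equilibrium_jacobian k t v = vector [
     vector [0, -k, 0, 0, t, 0],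
     vector [k, 0, 0, -t, 0, 0],
     0,
     vector [0, -v, 0, 0, 0, 0],
     vector [v, 0, 0, 0, 0, 0],
     0]"

lemma det_characteristic_equilibrium_jacobian:
  "det (mat x - equilibrium_jacobian k t v) =
    x^2 * (x^4 + x^2 * (k^2 - 2 * (t * v)) + (t * v)^2)"
proof -
  let ?A = "mat x - equilibrium_jacobian k t v"
  have compl: "- {1, 2, 4, 5} = {3, 6::6}"
    using exhaust_6 by auto
  have "?A$i$j = 0" if "i \<notin> {1, 2, 4, 5}" "j \<noteq> i" for i j
  proof -
    have "i = 3 \<or> i = 6"
      using that(1) exhaust_6[of i] by auto
    with that(2) show ?thesis
      by (auto simp: mat_def equilibrium_jacobian_def)
  qed
  then have "det ?A = x^2 * (\<Sum>p\<in>{p. p permutes {1, 2, 4, 5}}.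
      of_int (sign p) * (\<Prod>i\<in>{1, 2, 4, 5}. ?A$i$(p i)))"
    by (subst det_eq_prod_diagonal_times_det_block[of "{1, 2, 4, 5}"])
      (auto simp: compl mat_def equilibrium_jacobian_def power2_eq_square)
  also have "\<dots> = x^2 * (x^4 + x^2 * (k^2 - 2 * (t * v)) + (t * v)^2)"
    by (simp add: sum_over_permutations_insert sign_swap_id sign_compose permutation_swap_id
        permutation_compose swap_id_eq mat_def equilibrium_jacobian_def)
      (simp add: algebra_simps power2_eq_square power4_eq_xxxx)
  finally show ?thesis .
qed

lemma ez_nth [simp]: "ez $ 1 = 0" "ez $ 2 = 0" "ez $ 3 = 1"
  by (simp_all add: ez_def)

lemma pack_ez_nth [simp]:
  "pack (s *\<^sub>R ez) (m *\<^sub>R ez) $ 1 = 0" "pack (s *\<^sub>R ez) (m *\<^sub>R ez) $ 2 = 0"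
  "pack (s *\<^sub>R ez) (m *\<^sub>R ez) $ 3 = s" "pack (s *\<^sub>R ez) (m *\<^sub>R ez) $ 4 = 0"
  "pack (s *\<^sub>R ez) (m *\<^sub>R ez) $ 5 = 0" "pack (s *\<^sub>R ez) (m *\<^sub>R ez) $ 6 = m"
  by (simp_all add: pack_def)

lemma field_nth:
  fixes z :: "real^6"
  defines "p \<equiv> z$1 * z$4 + z$2 * z$5 + z$3 * z$6"
  shows
  "field I1 \<delta> V' z $ 1 = - (z$2 * ((z$6 + \<delta>*p*z$3)/I1) - z$3 * ((z$5 + \<delta>*p*z$2)/I1))"
  "field I1 \<delta> V' z $ 2 = - (z$3 * ((z$4 + \<delta>*p*z$1)/I1) - z$1 * ((z$6 + \<delta>*p*z$3)/I1))"
  "field I1 \<delta> V' z $ 3 = - (z$1 * ((z$5 + \<delta>*p*z$2)/I1) - z$2 * ((z$4 + \<delta>*p*z$1)/I1))"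
  "field I1 \<delta> V' z $ 4 = - (z$2 * (\<delta>*p*z$6/I1 + V'(z$3)) - z$3 * (\<delta>*p*z$5/I1))
        - (z$5 * ((z$6 + \<delta>*p*z$3)/I1) - z$6 * ((z$5 + \<delta>*p*z$2)/I1))"
  "field I1 \<delta> V' z $ 5 = - (z$3 * (\<delta>*p*z$4/I1) - z$1 * (\<delta>*p*z$6/I1 + V'(z$3)))
        - (z$6 * ((z$4 + \<delta>*p*z$1)/I1) - z$4 * ((z$6 + \<delta>*p*z$3)/I1))"
  "field I1 \<delta> V' z $ 6 = - (z$1 * (\<delta>*p*z$5/I1) - z$2 * (\<delta>*p*z$4/I1))
        - (z$4 * ((z$5 + \<delta>*p*z$2)/I1) - z$5 * ((z$4 + \<delta>*p*z$1)/I1))"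
  by (simp_all add: field_def pack_def apart_def lpart_def grad_l_def grad_a_def cross3_def
      inner_vec_def sum_3 p_def Let_def divide_simps)

lemma field_vanishes_on_ez_axis: "field I1 \<delta> V' (pack (s *\<^sub>R ez) (m *\<^sub>R ez)) = 0"
  by (simp add: vec_eq_iff forall_6 field_nth)

lemma field_has_derivative_on_ez_axis:
  assumes V'_deriv: "(V' has_real_derivative d) (at s)" and s: "s^2 = 1" and I1: "I1 \<noteq> 0"
  shows "(field I1 \<delta> V' has_derivative (\<lambda>h. equilibrium_jacobian (m / I1) (s / I1) (V' s) *v h))
    (at (pack (s *\<^sub>R ez) (m *\<^sub>R ez)))"
proof -
  let ?z0 = "pack (s *\<^sub>R ez) (m *\<^sub>R ez)"
  have ss: "s * (s * y) = y" for y
    using s by (simp add: power2_eq_square flip: mult.assoc)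
  note vec_nth_deriv =
    bounded_linear_vec_nth[THEN bounded_linear_imp_has_derivative, derivative_intros]
  have "(V' has_real_derivative d) (at (?z0 $ 3))"
    using V'_deriv by simp
  from DERIV_compose_FDERIV[OF this vec_nth_deriv]
  have "((\<lambda>z. V' (z $ 3)) has_derivative (\<lambda>h. h $ 3 * d)) (at ?z0)" .
  note this[derivative_intros]
  have "\<forall>k. ((\<lambda>z. field I1 \<delta> V' z $ k) has_derivative
      (\<lambda>h. (equilibrium_jacobian (m / I1) (s / I1) (V' s) *v h) $ k)) (at ?z0)"
    unfolding forall_6 field_nth
    by (auto intro!: derivative_eq_intros
        simp: fun_eq_iff matrix_vector_mult_def sum_6 equilibrium_jacobian_def field_simps ss I1)
  then show ?thesis
    using has_derivative_vec_nth_iff by blast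
qed

lemma Pplus_eq_product:
  "Pplus \<kappa> f w =
    (w^2 + \<i> * of_real \<kappa> * w - of_real f) * (w^2 + \<i> * of_real (- \<kappa>) * w - of_real f)"
  by (simp add: Pplus_def algebra_simps power2_eq_square power4_eq_xxxx)

lemma Pplus_of_real: "Pplus \<kappa> f (of_real x) = of_real (x^4 + x^2 * (\<kappa>^2 - 2 * f) + f^2)"
  by (simp add: Pplus_def)

lemma quadratic_root_on_imaginary_axis:
  assumes root: "w^2 + \<i> * of_real e * w - of_real f = 0" and disc: "4 * f \<le> e^2"
  shows "Re w = 0"
proof (rule ccontr)
  obtain a b where w: "w = Complex a b"
    by (cases w)
  assume "Re w \<noteq> 0"
  then have a: "a \<noteq> 0"
    by (simp add: w)
  from arg_cong[OF root, of Im] have "a * (2 * b + e) = 0"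
    by (simp add: w power2_eq_square algebra_simps)
  with a have b: "b = - e / 2"
    by simp
  from arg_cong[OF root, of Re] have "a^2 - b^2 - e * b = f"
    by (simp add: w power2_eq_square)
  then have "a^2 = f - e^2 / 4"
    unfolding b by (simp add: power2_eq_square field_simps)
  moreover have "a^2 > 0"
    using a by simp
  ultimately show False
    using disc by linarith
qed

lemma Pplus_roots_on_imaginary_axis:
  assumes "4 * f \<le> \<kappa>^2" and "Pplus \<kappa> f w = 0"
  shows "Re w = 0"
proof -
  from assms(2) consider
      "w^2 + \<i> * of_real \<kappa> * w - of_real f = 0"
    | "w^2 + \<i> * of_real (- \<kappa>) * w - of_real f = 0"
    unfolding Pplus_eq_product by auto
  then show ?thesis
  proof cases
    case 1
    then show ?thesis
      using assms(1) by (rule quadratic_root_on_imaginary_axis)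
  next
    case 2
    moreover have "4 * f \<le> (- \<kappa>)^2"
      using assms(1) by simp
    ultimately show ?thesis
      by (rule quadratic_root_on_imaginary_axis)
  qed
qed

lemma Pplus_root_off_imaginary_axis:
  assumes "\<kappa>^2 < 4 * f"
  shows "\<exists>w. Pplus \<kappa> f w = 0 \<and> Re w \<noteq> 0"
proof -
  define r where "r = sqrt (4 * f - \<kappa>^2)"
  have r: "r * r = 4 * f - \<kappa>^2" "r > 0"
    using assms by (simp_all add: r_def flip: power2_eq_square)
  define w where "w = Complex (r / 2) (- \<kappa> / 2)"
  have "w^2 + \<i> * of_real \<kappa> * w - of_real f = 0"
    by (simp add: w_def complex_eq_iff power2_eq_square field_simps r(1))
  then have "Pplus \<kappa> f w = 0"
    unfolding Pplus_eq_product by simp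
  moreover have "Re w \<noteq> 0"
    using r(2) by (simp add: w_def)
  ultimately show ?thesis by blast
qed

theorem mainTheorem3:
  fixes V V' V'' :: "real \<Rightarrow> real" and I1 \<delta> s m :: real
  assumes V_deriv: "\<And>x. (V has_real_derivative V' x) (at x)"
    and V'_deriv: "\<And>x. (V' has_real_derivative V'' x) (at x)"
    and V''_cont: "continuous_on UNIV V''"
    and I1_pos: "I1 > 0"
    and s: "s = 1 \<or> s = -1"
  defines "z0 \<equiv> pack (s *\<^sub>R ez) (m *\<^sub>R ez)"
    and "\<kappa> \<equiv> m / I1"
    and "f \<equiv> s * V' s / I1"
  shows "field I1 \<delta> V' z0 = 0
    \<and> field I1 \<delta> V' differentiable (at z0)
    \<and> (\<forall>x::real. det (mat x - matrix (frechet_derivative (field I1 \<delta> V') (at z0)))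
                  = x^2 * Re (Pplus \<kappa> f (of_real x)))
    \<and> ((\<forall>w. Pplus \<kappa> f w = 0 \<longrightarrow> Re w = 0) \<longleftrightarrow> \<kappa>^2 \<ge> 4 * f)
    \<and> (\<kappa>^2 < 4 * f \<longrightarrow> (\<exists>w. Pplus \<kappa> f w = 0 \<and> Re w \<noteq> 0))"
proof -
  have "s^2 = 1" and "I1 \<noteq> 0"
    using s I1_pos by auto
  from field_has_derivative_on_ez_axis[OF V'_deriv this]
  have deriv: "(field I1 \<delta> V' has_derivative (\<lambda>h. equilibrium_jacobian \<kappa> (s / I1) (V' s) *v h))
      (at z0)"
    unfolding z0_def \<kappa>_def .
  then have "matrix (frechet_derivative (field I1 \<delta> V') (at z0)) =
      equilibrium_jacobian \<kappa> (s / I1) (V' s)"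
    by (simp add: frechet_derivative_at[OF deriv, symmetric])
  moreover have "s / I1 * V' s = f"
    by (simp add: f_def)
  ultimately have char: "det (mat x - matrix (frechet_derivative (field I1 \<delta> V') (at z0)))
      = x^2 * Re (Pplus \<kappa> f (of_real x))" for x
    by (simp add: det_characteristic_equilibrium_jacobian Pplus_of_real)
  show ?thesis
  proof (intro conjI allI)
    show "field I1 \<delta> V' z0 = 0"
      unfolding z0_def by (rule field_vanishes_on_ez_axis)
    show "field I1 \<delta> V' differentiable (at z0)"
      using deriv by (rule differentiableI)
    show "(\<forall>w. Pplus \<kappa> f w = 0 \<longrightarrow> Re w = 0) \<longleftrightarrow> \<kappa>^2 \<ge> 4 * f"
      using Pplus_roots_on_imaginary_axis Pplus_root_off_imaginary_axis[of \<kappa> f] by force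
    show "\<kappa>^2 < 4 * f \<longrightarrow> (\<exists>w. Pplus \<kappa> f w = 0 \<and> Re w \<noteq> 0)"
      using Pplus_root_off_imaginary_axis by blast
  qed (rule char)
qed

end
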